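(* Let $\varphi_1(m,n)=(2m+n-1)/3$ and $\varphi_2(m,n)=(m+2n-2)/3$, and for a 4-tuple set $\varphi_i(a,b,c,d)=\varphi_i(a+b,c+d)$ and $\varphi_i(T)=\varphi_i(\lambda(T))$ for a tree $T$. Then: (i) If $\lambda(T)=(a,b,c,d)$ for a tree $T$, then $2m+n\equiv 1\pmod 3$, where $m=a+b$ and $n=c+d$. (ii) Every tree $T$ has exactly $\varphi_1(T)$ vertices of color $\alpha$, $\varphi_1(T)$ vertices of color $\beta$, $\varphi_2(T)$ vertices of color $\gamma$, and $\varphi_2(T)+1$ vertices of color $1$. (iii) In any nontrivial tree $T$, $\alpha^\#\le\varphi_1(T)$, $\beta^\#\le\varphi_1(T)$, $\gamma^\#\le\varphi_2(T)$ and $1^\#\le\varphi_2(T)$. (iv) A 4-tuple $(a,b,c,d)$ of nonnegative integers different from $(0,0,0,1)$ is representable iff $2a+2b+c+d\equiv1\pmod 3$, $a\le\varphi_1(a,b,c,d)$, $b\le\varphi_1(a,b,c,d)$, $c\le\varphi_2(a,b,c,d)$ and $d\le\varphi_2(a,b,c,d)$.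
   Context: A tree is a full binary tree: a finite rooted tree in which every non-leaf vertex has exactly two children, a left child and a right child; the trivial tree has one vertex. Let $\mathbf{KL}=\{1,\alpha,\beta,\gamma\}$ be the Klein 4-group ($\alpha^2=\beta^2=1$, $\alpha\beta=\gamma$). The vertices of a tree are colored by elements of $\mathbf{KL}$: the root has color $1$, a left child has $\alpha$ times the color of its parent, and a right child has $\beta$ times the color of its parent. For $g\in\mathbf{KL}$, $g^\#$ denotes the number of leaves of color $g$, and the total color of $T$ is $\lambda(T)=(\alpha^\#,\beta^\#,\gamma^\#,1^\#)$. A 4-tuple of natural numbers is representable if it equals $\lambda(T)$ for some tree $T$. *)

theory Defs
  imports Main "HOL-Library.Multiset" Complex_Main
begin

datatype tree = Leaf | Node tree tree

datatype kl = One | Alpha | Beta | Gamma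

fun klmul :: "kl \<Rightarrow> kl \<Rightarrow> kl" where
  "klmul One x = x"
| "klmul x One = x"
| "klmul Alpha Alpha = One"
| "klmul Beta Beta = One"
| "klmul Gamma Gamma = One"
| "klmul Alpha Beta = Gamma"
| "klmul Beta Alpha = Gamma"
| "klmul Alpha Gamma = Beta"
| "klmul Gamma Alpha = Beta"
| "klmul Beta Gamma = Alpha"
| "klmul Gamma Beta = Alpha"

fun leaf_colors :: "kl \<Rightarrow> tree \<Rightarrow> kl multiset" where
  "leaf_colors c Leaf = {#c#}"
| "leaf_colors c (Node l r) = leaf_colors (klmul Alpha c) l + leaf_colors (klmul Beta c) r"

fun vertex_colors :: "kl \<Rightarrow> tree \<Rightarrow> kl multiset" where
  "vertex_colors c Leaf = {#c#}"
| "vertex_colors c (Node l r) =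
     add_mset c (vertex_colors (klmul Alpha c) l + vertex_colors (klmul Beta c) r)"

definition nleaves :: "kl \<Rightarrow> tree \<Rightarrow> nat" where
  "nleaves g T = count (leaf_colors One T) g"

definition nvertices :: "kl \<Rightarrow> tree \<Rightarrow> nat" where
  "nvertices g T = count (vertex_colors One T) g"

definition total_color :: "tree \<Rightarrow> nat \<times> nat \<times> nat \<times> nat" where
  "total_color T = (nleaves Alpha T, nleaves Beta T, nleaves Gamma T, nleaves One T)"

definition representable :: "nat \<times> nat \<times> nat \<times> nat \<Rightarrow> bool" where
  "representable t \<longleftrightarrow> (\<exists>T. total_color T = t)"

definition phi1 :: "nat \<Rightarrow> nat \<Rightarrow> real" where
  "phi1 m n = (2 * real m + real n - 1) / 3"

definition phi2 :: "nat \<Rightarrow> nat \<Rightarrow> real" where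
  "phi2 m n = (real m + 2 * real n - 2) / 3"

definition phi1_4 :: "nat \<times> nat \<times> nat \<times> nat \<Rightarrow> real" where
  "phi1_4 t = (case t of (a, b, c, d) \<Rightarrow> phi1 (a + b) (c + d))"

definition phi2_4 :: "nat \<times> nat \<times> nat \<times> nat \<Rightarrow> real" where
  "phi2_4 t = (case t of (a, b, c, d) \<Rightarrow> phi2 (a + b) (c + d))"

definition phi1T :: "tree \<Rightarrow> real" where "phi1T T = phi1_4 (total_color T)"
definition phi2T :: "tree \<Rightarrow> real" where "phi2T T = phi2_4 (total_color T)"

end

theory Submission
  imports Defs
begin

text \<open>A non-root vertex of color \<open>g\<close> is a child of an internal vertex of color \<open>\<alpha>g\<close> or
  \<open>\<beta>g\<close>. Together with "vertices = leaves + internal vertices" for every color this gives a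
  linear system whose solution is \<open>\<alpha>-vertices = \<beta>-vertices = \<phi>\<^sub>1\<close>,
  \<open>\<gamma>-vertices = \<phi>\<^sub>2\<close> and \<open>1-vertices = \<phi>\<^sub>2 + 1\<close>. Hence \<open>\<phi>\<^sub>1, \<phi>\<^sub>2\<close> are
  integers, and bounding leaves by vertices (the root being an internal vertex of color \<open>1\<close>)
  gives the inequalities. Conversely, splitting a leaf of color \<open>1\<close> or \<open>\<gamma>\<close> creates leaves
  \<open>\<alpha>, \<beta>\<close> and splitting one of color \<open>\<alpha>\<close> or \<open>\<beta>\<close> creates leaves \<open>\<gamma>, 1\<close>; every
  admissible tuple other than \<open>(1, 1, 0, 0)\<close> arises in this way from an admissible tuple
  with one leaf fewer, so induction on the number of leaves builds a tree.\<close>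

fun internal_colors :: "kl \<Rightarrow> tree \<Rightarrow> kl multiset" where
  "internal_colors c Leaf = {#}"
| "internal_colors c (Node l r) =
     add_mset c (internal_colors (klmul Alpha c) l + internal_colors (klmul Beta c) r)"

lemma vertex_colors_eq_leaf_colors_plus_internal_colors:
  "vertex_colors c T = leaf_colors c T + internal_colors c T"
  by (induction T arbitrary: c) auto

lemma nvertices_eq_nleaves_plus_internal:
  "nvertices g T = nleaves g T + count (internal_colors One T) g"
  by (simp add: nvertices_def nleaves_def vertex_colors_eq_leaf_colors_plus_internal_colors)

lemma count_vertex_colors:
  "count (vertex_colors c T) g = of_bool (g = c)
     + count (internal_colors c T) (klmul Alpha g) + count (internal_colors c T) (klmul Beta g)"
proof (induction T arbitrary: c)
  case Leaf
  then show ?case by simp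
next
  case (Node l r)
  show ?case using Node.IH(1)[of "klmul Alpha c"] Node.IH(2)[of "klmul Beta c"]
    by (cases g; cases c; simp)
qed

lemma nvertices_linear_system:
  "3 * nvertices Alpha T + 1
     = 2 * nleaves Alpha T + 2 * nleaves Beta T + nleaves Gamma T + nleaves One T"
  "nvertices Beta T = nvertices Alpha T"
  "3 * nvertices Gamma T + 2
     = nleaves Alpha T + nleaves Beta T + 2 * nleaves Gamma T + 2 * nleaves One T"
  "nvertices One T = nvertices Gamma T + 1"
proof -
  define I where "I g = count (internal_colors One T) g" for g
  have V: "nvertices g T = of_bool (g = One) + I (klmul Alpha g) + I (klmul Beta g)" for g
    unfolding nvertices_def I_def by (rule count_vertex_colors)
  have L: "nvertices g T = nleaves g T + I g" for g
    unfolding I_def by (rule nvertices_eq_nleaves_plus_internal)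
  show "3 * nvertices Alpha T + 1
      = 2 * nleaves Alpha T + 2 * nleaves Beta T + nleaves Gamma T + nleaves One T"
    "nvertices Beta T = nvertices Alpha T"
    "3 * nvertices Gamma T + 2
      = nleaves Alpha T + nleaves Beta T + 2 * nleaves Gamma T + 2 * nleaves One T"
    "nvertices One T = nvertices Gamma T + 1"
    using V[of One] V[of Alpha] V[of Beta] V[of Gamma] L[of One] L[of Alpha] L[of Beta] L[of Gamma]
    by simp_all
qed

lemma nleaves_le_nvertices: "nleaves g T \<le> nvertices g T"
  by (simp add: nvertices_eq_nleaves_plus_internal)

lemma nleaves_One_less_nvertices_One: "T \<noteq> Leaf \<Longrightarrow> nleaves One T < nvertices One T"
  by (cases T) (simp_all add: nvertices_eq_nleaves_plus_internal)

lemma leaf_colors_expand_leaf: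
  assumes "g \<in># leaf_colors c T"
  shows "\<exists>T'. leaf_colors c T' = leaf_colors c T - {#g#} + {#klmul Alpha g, klmul Beta g#}"
  using assms
proof (induction T arbitrary: c)
  case Leaf
  then show ?case by (intro exI[of _ "Node Leaf Leaf"]) auto
next
  case (Node l r)
  show ?case
  proof (cases "g \<in># leaf_colors (klmul Alpha c) l")
    case True
    with Node.IH(1) obtain l' where "leaf_colors (klmul Alpha c) l' =
      leaf_colors (klmul Alpha c) l - {#g#} + {#klmul Alpha g, klmul Beta g#}" by blast
    with True show ?thesis by (intro exI[of _ "Node l' r"]) (auto simp: multiset_eq_iff)
  next
    case False
    with Node.prems have r: "g \<in># leaf_colors (klmul Beta c) r" by simp
    with Node.IH(2) obtain r' where "leaf_colors (klmul Beta c) r' =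
      leaf_colors (klmul Beta c) r - {#g#} + {#klmul Alpha g, klmul Beta g#}" by blast
    with r show ?thesis by (intro exI[of _ "Node l r'"]) (auto simp: multiset_eq_iff)
  qed
qed

lemma nleaves_expand_leaf:
  assumes "0 < nleaves g T"
  obtains T' where "\<And>h. nleaves h T' = nleaves h T - of_bool (h = g)
    + of_bool (h = klmul Alpha g) + of_bool (h = klmul Beta g)"
proof -
  from assms obtain T' where T': "leaf_colors One T' =
      leaf_colors One T - {#g#} + {#klmul Alpha g, klmul Beta g#}"
    using leaf_colors_expand_leaf[of g One T] by (auto simp: nleaves_def)
  have "nleaves h T' = nleaves h T - of_bool (h = g)
    + of_bool (h = klmul Alpha g) + of_bool (h = klmul Beta g)" for h
    using assms by (cases g; cases h; simp add: nleaves_def T')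
  then show thesis by (rule that)
qed

lemma representable_expand_leaf:
  shows representable_expand_One:
      "representable (a, b, c, Suc d) \<Longrightarrow> representable (Suc a, Suc b, c, d)"
    and representable_expand_Gamma:
      "representable (a, b, Suc c, d) \<Longrightarrow> representable (Suc a, Suc b, c, d)"
    and representable_expand_Alpha:
      "representable (Suc a, b, c, d) \<Longrightarrow> representable (a, b, Suc c, Suc d)"
    and representable_expand_Beta:
      "representable (a, Suc b, c, d) \<Longrightarrow> representable (a, b, Suc c, Suc d)"
proof -
  have expand: "representable t'"
    if "representable t"
      and new_color: "\<And>T T'. total_color T = t \<Longrightarrow> (\<And>h. nleaves h T' = nleaves h T - of_bool (h = g)
             + of_bool (h = klmul Alpha g) + of_bool (h = klmul Beta g)) \<Longrightarrow> total_color T' = t'"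
      and leaf: "\<And>T. total_color T = t \<Longrightarrow> 0 < nleaves g T"
    for t t' g
  proof -
    from \<open>representable t\<close> obtain T where T: "total_color T = t"
      unfolding representable_def by blast
    obtain T' where "\<And>h. nleaves h T' = nleaves h T - of_bool (h = g)
        + of_bool (h = klmul Alpha g) + of_bool (h = klmul Beta g)"
      using nleaves_expand_leaf[OF leaf[OF T]] by blast
    with T new_color show ?thesis unfolding representable_def by blast
  qed
  show "representable (a, b, c, Suc d) \<Longrightarrow> representable (Suc a, Suc b, c, d)"
    by (rule expand[where g = One]) (auto simp: total_color_def)
  show "representable (a, b, Suc c, d) \<Longrightarrow> representable (Suc a, Suc b, c, d)"
    by (rule expand[where g = Gamma]) (auto simp: total_color_def)
  show "representable (Suc a, b, c, d) \<Longrightarrow> representable (a, b, Suc c, Suc d)"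
    by (rule expand[where g = Alpha]) (auto simp: total_color_def)
  show "representable (a, Suc b, c, d) \<Longrightarrow> representable (a, b, Suc c, Suc d)"
    by (rule expand[where g = Beta]) (auto simp: total_color_def)
qed

text \<open>The witnesses \<open>k\<close> and \<open>j\<close> are \<open>\<phi>\<^sub>1\<close> and \<open>\<phi>\<^sub>2\<close>; for a tree they are the numbers
  of its \<open>\<alpha>\<close>- and \<open>\<gamma>\<close>-vertices.\<close>
definition admissible :: "nat \<times> nat \<times> nat \<times> nat \<Rightarrow> bool" where
  "admissible t = (case t of (a, b, c, d) \<Rightarrow> \<exists>k j.
     2 * a + 2 * b + c + d = 3 * k + 1 \<and> a + b + 2 * c + 2 * d = 3 * j + 2
     \<and> a \<le> k \<and> b \<le> k \<and> c \<le> j \<and> d \<le> j)"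

lemma admissibleI:
  assumes "2 * a + 2 * b + c + d = 3 * k + 1" and "a + b + 2 * c + 2 * d = 3 * j + 2"
    and "a \<le> k" and "b \<le> k" and "c \<le> j" and "d \<le> j"
  shows "admissible (a, b, c, d)"
  using assms unfolding admissible_def by blast

lemma admissibleE:
  assumes "admissible (a, b, c, d)"
  obtains k j where "2 * a + 2 * b + c + d = 3 * k + 1" and "a + b + 2 * c + 2 * d = 3 * j + 2"
    and "a \<le> k" and "b \<le> k" and "c \<le> j" and "d \<le> j"
  using assms unfolding admissible_def by blast

lemma admissible_iff:
  "admissible (a, b, c, d) \<longleftrightarrow> (2 * a + 2 * b + c + d) mod 3 = 1
     \<and> 3 * a + 1 \<le> 2 * a + 2 * b + c + d \<and> 3 * b + 1 \<le> 2 * a + 2 * b + c + d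
     \<and> 3 * c + 2 \<le> a + b + 2 * c + 2 * d \<and> 3 * d + 2 \<le> a + b + 2 * c + 2 * d"
  (is "_ \<longleftrightarrow> ?mod \<and> ?a \<and> ?b \<and> ?c \<and> ?d")
proof
  assume "admissible (a, b, c, d)"
  then obtain k j where s: "2 * a + 2 * b + c + d = 3 * k + 1"
    and t: "a + b + 2 * c + 2 * d = 3 * j + 2" and "a \<le> k" "b \<le> k" "c \<le> j" "d \<le> j"
    by (rule admissibleE)
  then show "?mod \<and> ?a \<and> ?b \<and> ?c \<and> ?d" by simp
next
  assume "?mod \<and> ?a \<and> ?b \<and> ?c \<and> ?d"
  then have mod: ?mod and bounds: ?a ?b ?c ?d by simp_all
  define k where "k = (2 * a + 2 * b + c + d) div 3"
  have s: "2 * a + 2 * b + c + d = 3 * k + 1"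
    using mod div_mult_mod_eq[of "2 * a + 2 * b + c + d" 3] unfolding k_def by simp
  have "k + 1 \<le> a + b + c + d" using s bounds by linarith
  then obtain j where j: "a + b + c + d = k + 1 + j" using le_iff_add by blast
  with s have t: "a + b + 2 * c + 2 * d = 3 * j + 2" by linarith
  show "admissible (a, b, c, d)"
    by (rule admissibleI[OF s t]) (use s t bounds in linarith)+
qed

lemma admissible_total_color:
  assumes "T \<noteq> Leaf"
  shows "admissible (total_color T)"
  unfolding total_color_def
proof (rule admissibleI)
  show "2 * nleaves Alpha T + 2 * nleaves Beta T + nleaves Gamma T + nleaves One T
      = 3 * nvertices Alpha T + 1"
    "nleaves Alpha T + nleaves Beta T + 2 * nleaves Gamma T + 2 * nleaves One T
      = 3 * nvertices Gamma T + 2"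
    using nvertices_linear_system(1,3) by simp_all
  show "nleaves Alpha T \<le> nvertices Alpha T" "nleaves Beta T \<le> nvertices Alpha T"
    "nleaves Gamma T \<le> nvertices Gamma T" "nleaves One T \<le> nvertices Gamma T"
    using nleaves_le_nvertices[of Alpha T] nleaves_le_nvertices[of Beta T]
      nleaves_le_nvertices[of Gamma T] nvertices_linear_system(2,4)[of T]
      nleaves_One_less_nvertices_One[OF assms] by simp_all
qed

lemma admissible_predecessor:
  assumes adm: "admissible (a, b, c, d)" and ne: "(a, b, c, d) \<noteq> (1, 1, 0, 0)"
  obtains a' b' where "a = Suc a'" "b = Suc b'"
      "admissible (a', b', c, Suc d) \<or> admissible (a', b', Suc c, d)"
    | c' d' where "c = Suc c'" "d = Suc d'"
      "admissible (Suc a, b, c', d') \<or> admissible (a, Suc b, c', d')"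
proof -
  from adm obtain k j where s: "2 * a + 2 * b + c + d = 3 * k + 1"
    and t: "a + b + 2 * c + 2 * d = 3 * j + 2" and le: "a \<le> k" "b \<le> k" "c \<le> j" "d \<le> j"
    by (rule admissibleE)
  show thesis
  proof (cases "0 < a \<and> 0 < b")
    case True
    then obtain a' b' where ab: "a = Suc a'" "b = Suc b'" by (auto simp: gr0_conv_Suc)
    have "d < j \<or> c < j"
    proof (rule ccontr)
      assume "\<not> (d < j \<or> c < j)"
      with le t have "c = j" "d = j" "a + b + j = 2" by auto
      with ab ne show False by auto
    qed
    moreover obtain k' where k: "k = Suc k'" using le(1) ab by (cases k) auto
    ultimately have "admissible (a', b', c, Suc d) \<or> admissible (a', b', Suc c, d)"
      using admissibleI[of a' b' c "Suc d" k' j] admissibleI[of a' b' "Suc c" d k' j]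
        s t le ab by auto
    with ab show thesis by (rule that(1))
  next
    case False
    with s t le have "0 < c" "0 < d" by auto
    then obtain c' d' where cd: "c = Suc c'" "d = Suc d'" by (auto simp: gr0_conv_Suc)
    from s cd have "0 < k" by auto
    with False have "a < k \<or> b < k" by auto
    moreover obtain j' where j: "j = Suc j'" using le(3) cd by (cases j) auto
    ultimately have "admissible (Suc a, b, c', d') \<or> admissible (a, Suc b, c', d')"
      using admissibleI[of "Suc a" b c' d' k j'] admissibleI[of a "Suc b" c' d' k j']
        s t le cd by auto
    with cd show thesis by (rule that(2))
  qed
qed

lemma representable_if_admissible: "admissible t \<Longrightarrow> representable t"
proof (induction t rule: measure_induct_rule[where f = "\<lambda>(a, b, c, d). a + b + c + d"])
  case (less t)
  obtain a b c d where t: "t = (a, b, c, d)" by (cases t) auto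
  show ?case
  proof (cases "t = (1, 1, 0, 0)")
    case True
    then show ?thesis
      by (auto simp: representable_def total_color_def nleaves_def intro!: exI[of _ "Node Leaf Leaf"])
  next
    case False
    with less.prems t have "admissible (a, b, c, d)" "(a, b, c, d) \<noteq> (1, 1, 0, 0)" by simp_all
    then show ?thesis
    proof (cases rule: admissible_predecessor)
      case (1 a' b')
      with less.IH t show ?thesis
        using representable_expand_One representable_expand_Gamma by fastforce
    next
      case (2 c' d')
      with less.IH t show ?thesis
        using representable_expand_Alpha representable_expand_Beta by fastforce
    qed
  qed
qed

lemma of_nat_eq_phi1_iff: "real x = phi1 m n \<longleftrightarrow> 3 * x + 1 = 2 * m + n"
proof -
  have "real x = phi1 m n \<longleftrightarrow> real (3 * x + 1) = real (2 * m + n)"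
    by (simp add: phi1_def field_simps)
  then show ?thesis by (simp only: of_nat_eq_iff)
qed

lemma of_nat_eq_phi2_iff: "real x = phi2 m n \<longleftrightarrow> 3 * x + 2 = m + 2 * n"
proof -
  have "real x = phi2 m n \<longleftrightarrow> real (3 * x + 2) = real (m + 2 * n)"
    by (simp add: phi2_def field_simps)
  then show ?thesis by (simp only: of_nat_eq_iff)
qed

lemma of_nat_le_phi1_iff: "real x \<le> phi1 m n \<longleftrightarrow> 3 * x + 1 \<le> 2 * m + n"
proof -
  have "real x \<le> phi1 m n \<longleftrightarrow> real (3 * x + 1) \<le> real (2 * m + n)"
    by (simp add: phi1_def field_simps)
  then show ?thesis by (simp only: of_nat_le_iff)
qed

lemma of_nat_le_phi2_iff: "real x \<le> phi2 m n \<longleftrightarrow> 3 * x + 2 \<le> m + 2 * n"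
proof -
  have "real x \<le> phi2 m n \<longleftrightarrow> real (3 * x + 2) \<le> real (m + 2 * n)"
    by (simp add: phi2_def field_simps)
  then show ?thesis by (simp only: of_nat_le_iff)
qed

lemma admissible_iff_phi_bounds:
  "admissible (a, b, c, d) \<longleftrightarrow> (2 * a + 2 * b + c + d) mod 3 = 1
     \<and> real a \<le> phi1_4 (a, b, c, d) \<and> real b \<le> phi1_4 (a, b, c, d)
     \<and> real c \<le> phi2_4 (a, b, c, d) \<and> real d \<le> phi2_4 (a, b, c, d)"
  by (simp add: admissible_iff phi1_4_def phi2_4_def of_nat_le_phi1_iff of_nat_le_phi2_iff
      algebra_simps)

lemma nvertices_eq_phiT:
  "real (nvertices Alpha T) = phi1T T" "real (nvertices Beta T) = phi1T T"
  "real (nvertices Gamma T) = phi2T T" "real (nvertices One T) = phi2T T + 1"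
  using nvertices_linear_system[of T]
  by (simp_all add: phi1T_def phi2T_def phi1_4_def phi2_4_def total_color_def
      of_nat_eq_phi1_iff of_nat_eq_phi2_iff algebra_simps)

theorem theorem4p1:
  shows
  "(\<forall>T a b c d. total_color T = (a, b, c, d) \<longrightarrow>
       (2 * (a + b) + (c + d)) mod 3 = 1)
   \<and> (\<forall>T. real (nvertices Alpha T) = phi1T T
          \<and> real (nvertices Beta T) = phi1T T
          \<and> real (nvertices Gamma T) = phi2T T
          \<and> real (nvertices One T) = phi2T T + 1)
   \<and> (\<forall>T. T \<noteq> Leaf \<longrightarrow>
          real (nleaves Alpha T) \<le> phi1T T
          \<and> real (nleaves Beta T) \<le> phi1T T
          \<and> real (nleaves Gamma T) \<le> phi2T T
          \<and> real (nleaves One T) \<le> phi2T T)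
   \<and> (\<forall>a b c d :: nat. (a, b, c, d) \<noteq> (0, 0, 0, 1) \<longrightarrow>
        (representable (a, b, c, d) \<longleftrightarrow>
          (2 * a + 2 * b + c + d) mod 3 = 1
          \<and> real a \<le> phi1_4 (a, b, c, d)
          \<and> real b \<le> phi1_4 (a, b, c, d)
          \<and> real c \<le> phi2_4 (a, b, c, d)
          \<and> real d \<le> phi2_4 (a, b, c, d)))"
proof (intro conjI allI impI)
  fix T a b c d
  assume "total_color T = (a, b, c, d)"
  then have "2 * (a + b) + (c + d) = 3 * nvertices Alpha T + 1"
    using nvertices_linear_system(1)[of T] by (simp add: total_color_def algebra_simps)
  then show "(2 * (a + b) + (c + d)) mod 3 = 1" by simp
next
  fix T :: tree
  assume "T \<noteq> Leaf"
  then have "admissible (total_color T)" by (rule admissible_total_color)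
  then show "real (nleaves Alpha T) \<le> phi1T T" "real (nleaves Beta T) \<le> phi1T T"
    "real (nleaves Gamma T) \<le> phi2T T" "real (nleaves One T) \<le> phi2T T"
    unfolding phi1T_def phi2T_def total_color_def admissible_iff_phi_bounds by simp_all
next
  fix a b c d :: nat
  assume non_trivial: "(a, b, c, d) \<noteq> (0, 0, 0, 1)"
  have "representable (a, b, c, d) \<longleftrightarrow> admissible (a, b, c, d)"
  proof
    assume "representable (a, b, c, d)"
    then obtain T where T: "total_color T = (a, b, c, d)" unfolding representable_def by blast
    with non_trivial have "T \<noteq> Leaf" by (auto simp: total_color_def nleaves_def)
    with T show "admissible (a, b, c, d)" using admissible_total_color by metis
  qed (rule representable_if_admissible)
  then show "representable (a, b, c, d) \<longleftrightarrow> (2 * a + 2 * b + c + d) mod 3 = 1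
      \<and> real a \<le> phi1_4 (a, b, c, d) \<and> real b \<le> phi1_4 (a, b, c, d)
      \<and> real c \<le> phi2_4 (a, b, c, d) \<and> real d \<le> phi2_4 (a, b, c, d)"
    by (simp only: admissible_iff_phi_bounds)
qed (simp_all add: nvertices_eq_phiT)

end
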